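(* Let $n,m,D$ be integers such that $n^2 \ge m \ge n \ge 4$ and $n/\sqrt{m} > D \ge 3$. There exists a family $\mathcal{G}$ of $n$-vertex directed graphs with diameter $D$ and $\Theta(m)$ edges such that any data structure for graphs in $\mathcal{G}$ that decides, for a queried edge $e$, whether the fault-tolerant diameter $\mathrm{diam}(G-e)$ remains at $D$ or increases to $(3D-1)/2$ for odd $D$ (respectively to $(3D/2)-1$ for even $D$) requires $\Omega(m)$ bits of space.
   Context: Graphs are unweighted. $G-e$ is $G$ with edge $e$ removed and $\mathrm{diam}(H)=\max_{s,t} d_H(s,t)$, the maximum shortest-path distance over ordered vertex pairs ($+\infty$ if $H$ is not strongly connected). *)

theory Defs
  imports Complex_Main "HOL-Library.Extended_Nat"
begin

definition is_digraph :: "nat \<Rightarrow> (nat \<times> nat) set \<Rightarrow> bool" where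
  "is_digraph n E \<longleftrightarrow> E \<subseteq> {0..<n} \<times> {0..<n} \<and> (\<forall>v. (v, v) \<notin> E)"

definition dist :: "(nat \<times> nat) set \<Rightarrow> nat \<Rightarrow> nat \<Rightarrow> enat" where
  "dist E s t = (if \<exists>k. (s, t) \<in> E ^^ k then enat (LEAST k. (s, t) \<in> E ^^ k) else \<infinity>)"

definition diam :: "nat \<Rightarrow> (nat \<times> nat) set \<Rightarrow> enat" where
  "diam n E = Sup {dist E s t | s t. s < n \<and> t < n}"

definition fd_target :: "nat \<Rightarrow> nat" where
  "fd_target D = (if odd D then (3 * D - 1) div 2 else 3 * D div 2 - 1)"

end

(*
  Write D = a + b + 1 with b = a or b = a + 1 and let k be about sqrt m / 2.  The graphs have
  a hub, k row paths Hub -> Row i 1 -> ... -> Row i a, k column paths Col j 0 -> ... -> Col j b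
  whose nodes all point back to the hub, a feeder path of length a - 1 from the hub to a node
  tip pointing to every Col j 0 and every Bridge j, edges Bridge j -> Col j 0 and
  Bridge j -> Hub, and padding nodes joined to the hub in both directions.  The queried edges
  are the k^2 cross edges Row i a -> Col j 0; a set S of positions adds the bypasses
  Row i a -> Bridge j for (i, j) in S.

  Every pair of nodes is joined by a path of length at most D, and Col 1 b is at distance D
  from Col 0 0.  Deleting the cross edge (i, j) keeps the diameter at D if (i, j) is in S; if
  not, Row i 1 needs 2 a + b + 1 = fd_target D steps to reach Col j b.  Lower bounds on
  distances come from potentials that increase by at most one along every edge.  So the
  answers of a correct query structure determine S, and some member of the family of
  2^(k^2) graphs needs k^2 >= m / 8 bits.
*)

theory Submission
  imports Defs "HOL-Library.Discrete_Functions"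
begin

section \<open>Distances, potentials and diameters\<close>

lemma relpow_map_prod_image:
  "(u, v) \<in> R ^^ l \<Longrightarrow> (f u, f v) \<in> (map_prod f f ` R) ^^ l"
proof (induction l arbitrary: v)
  case (Suc l)
  then obtain w where "(u, w) \<in> R ^^ l" "(w, v) \<in> R"
    by auto
  then show ?case
    using Suc.IH by (auto intro: relpow_Suc_I)
qed simp

lemma relpow_potential_bound:
  assumes "\<And>x y. (x, y) \<in> E \<Longrightarrow> \<psi> y \<le> \<psi> x + (1::int)" and "(s, t) \<in> E ^^ l"
  shows "\<psi> t \<le> \<psi> s + int l"
  using assms(2)
proof (induction l arbitrary: t)
  case (Suc l)
  then obtain z where "(s, z) \<in> E ^^ l" "(z, t) \<in> E"
    by auto
  then show ?case
    using Suc.IH assms(1) by fastforce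
qed simp

lemma dist_le_relpow: "(s, t) \<in> E ^^ l \<Longrightarrow> dist E s t \<le> enat l"
  unfolding dist_def by (auto intro: Least_le)

lemma dist_ge_potential:
  assumes "\<And>x y. (x, y) \<in> E \<Longrightarrow> \<psi> y \<le> \<psi> x + (1::int)" and "int K \<le> \<psi> t - \<psi> s"
  shows "enat K \<le> dist E s t"
proof (cases "\<exists>l. (s, t) \<in> E ^^ l")
  case True
  then have "(s, t) \<in> E ^^ (LEAST l. (s, t) \<in> E ^^ l)"
    by (rule LeastI_ex)
  then have "\<psi> t \<le> \<psi> s + int (LEAST l. (s, t) \<in> E ^^ l)"
    using relpow_potential_bound[where \<psi> = \<psi>, OF assms(1)] by blast
  with True assms(2) show ?thesis
    unfolding dist_def by simp
qed (simp add: dist_def)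

definition reach_within :: "('a \<times> 'a) set \<Rightarrow> nat \<Rightarrow> 'a \<Rightarrow> 'a \<Rightarrow> bool" where
  "reach_within R l u v \<longleftrightarrow> (\<exists>l' \<le> l. (u, v) \<in> R ^^ l')"

lemma reach_within_refl: "reach_within R l u u"
  unfolding reach_within_def by (auto intro: exI[of _ 0])

lemma reach_within_mono: "reach_within R l u v \<Longrightarrow> l \<le> l' \<Longrightarrow> reach_within R l' u v"
  unfolding reach_within_def using le_trans by blast

lemma reach_within_trans:
  assumes "reach_within R l1 u v" "reach_within R l2 v w" "l1 + l2 \<le> l"
  shows "reach_within R l u w"
proof -
  obtain m1 m2 where "m1 \<le> l1" "m2 \<le> l2" "(u, v) \<in> R ^^ m1" "(v, w) \<in> R ^^ m2"
    using assms(1,2) unfolding reach_within_def by blast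
  then have "m1 + m2 \<le> l" "(u, w) \<in> R ^^ (m1 + m2)"
    using assms(3) by (auto simp: relpow_add)
  then show ?thesis
    unfolding reach_within_def by blast
qed

lemma reach_within_edge: "(u, v) \<in> R \<Longrightarrow> reach_within R 1 u v"
  unfolding reach_within_def by (auto intro: exI[of _ 1])

lemma reach_within_step:
  assumes "(u, v) \<in> R" "reach_within R l v w"
  shows "reach_within R (Suc l) u w"
  using reach_within_trans[OF reach_within_edge[OF assms(1)] assms(2)] by simp

lemma reach_within_two: "(u, v) \<in> R \<Longrightarrow> (v, w) \<in> R \<Longrightarrow> reach_within R 2 u w"
  using reach_within_step[OF _ reach_within_edge] by (simp add: numeral_2_eq_2)

lemma reach_within_path:
  assumes "\<And>i. d \<le> i \<Longrightarrow> i < d' \<Longrightarrow> (x i, x (Suc i)) \<in> R" and "d \<le> d'"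
  shows "reach_within R (d' - d) (x d) (x d')"
  using assms(2)
proof (induction d' rule: dec_induct)
  case (step i)
  then have "(x i, x (Suc i)) \<in> R"
    using assms(1) by simp
  then have "reach_within R 1 (x i) (x (Suc i))"
    by (rule reach_within_edge)
  from reach_within_trans[OF step.IH this] step.hyps show ?case
    by simp
qed (rule reach_within_refl)

lemma diam_map_prod_eqI:
  fixes f :: "'a \<Rightarrow> nat" and \<psi> :: "'a \<Rightarrow> int"
  assumes bij: "bij_betw f V {..<n}" and sub: "R \<subseteq> V \<times> V"
    and close: "\<And>u v. u \<in> V \<Longrightarrow> v \<in> V \<Longrightarrow> reach_within R D u v"
    and pot: "\<And>u v. (u, v) \<in> R \<Longrightarrow> \<psi> v \<le> \<psi> u + 1"
    and far: "s \<in> V" "t \<in> V" "int D \<le> \<psi> t - \<psi> s"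
  shows "diam n (map_prod f f ` R) = enat D"
proof -
  let ?E = "map_prod f f ` R"
  have upper: "dist ?E x y \<le> enat D" if "x < n" "y < n" for x y
  proof -
    have "x \<in> f ` V" "y \<in> f ` V"
      using that bij_betw_imp_surj_on[OF bij] by auto
    then obtain u v where uv: "u \<in> V" "v \<in> V" "x = f u" "y = f v"
      by blast
    then obtain l where l: "l \<le> D" "(u, v) \<in> R ^^ l"
      using close unfolding reach_within_def by blast
    have "dist ?E x y \<le> enat l"
      unfolding uv(3,4) by (rule dist_le_relpow[OF relpow_map_prod_image[OF l(2)]])
    with l(1) show ?thesis
      by (meson enat_ord_simps(1) order_trans)
  qed
  have inv: "inv_into V f (f u) = u" if "u \<in> V" for u
    using bij that by (simp add: bij_betw_def)
  have "enat D \<le> dist ?E (f s) (f t)"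
  proof (rule dist_ge_potential[where \<psi> = "\<psi> \<circ> inv_into V f"])
    fix x y
    assume "(x, y) \<in> ?E"
    then obtain u v where uv: "(u, v) \<in> R" "x = f u" "y = f v"
      by auto
    with sub have "u \<in> V" "v \<in> V"
      by auto
    with uv pot inv show "(\<psi> \<circ> inv_into V f) y \<le> (\<psi> \<circ> inv_into V f) x + 1"
      by simp
  qed (use far inv in simp)
  moreover have "f s < n" "f t < n"
    using far bij_betw_apply[OF bij] by auto
  ultimately show ?thesis
    unfolding diam_def using upper
    by (intro antisym Sup_least) (auto intro: Sup_upper2)
qed

section \<open>Encodings\<close>

lemma card_short_bool_lists: "card {xs :: bool list. length xs < K} < 2 ^ K"
proof (cases K)
  case (Suc K')
  have "{xs :: bool list. length xs < K} = {xs. set xs \<subseteq> UNIV \<and> length xs \<le> K'}"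
    using Suc by auto
  then have "card {xs :: bool list. length xs < K} = (\<Sum>i\<le>K'. 2 ^ i)"
    using card_lists_length_le[of "UNIV :: bool set" K'] by simp
  also have "\<dots> = 2 ^ K - 1"
    using sum_power2[of K] unfolding Suc atLeast0LessThan lessThan_Suc_atMost .
  also have "\<dots> < 2 ^ K"
    by simp
  finally show ?thesis .
qed simp

lemma injective_code_long:
  fixes c :: "'a set \<Rightarrow> bool list"
  assumes "finite B" and "inj_on c (Pow B)"
  shows "\<exists>S \<subseteq> B. card B \<le> length (c S)"
proof (rule ccontr)
  assume "\<not> ?thesis"
  then have "c ` Pow B \<subseteq> {xs. length xs < card B}"
    by (auto simp: not_le)
  moreover have "finite {xs :: bool list. length xs < card B}"
    by (rule finite_subset[OF _ finite_lists_length_le[of UNIV "card B"]]) auto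
  ultimately have "card (Pow B) \<le> card {xs :: bool list. length xs < card B}"
    by (rule card_inj_on_le[OF assms(2)])
  with card_short_bool_lists[of "card B"] show False
    using assms(1) by (simp add: card_Pow)
qed

definition answers_fd_queries ::
    "nat \<Rightarrow> nat \<Rightarrow> (nat \<times> nat) set set \<Rightarrow> ((nat \<times> nat) set \<Rightarrow> bool list) \<Rightarrow> (bool list \<Rightarrow> nat \<times> nat \<Rightarrow> bool) \<Rightarrow> bool"
  where
  "answers_fd_queries n D F enc q \<longleftrightarrow>
     (\<forall>E \<in> F. \<forall>e \<in> E.
        (diam n (E - {e}) = enat D \<longrightarrow> q (enc E) e) \<and>
        (diam n (E - {e}) = enat (fd_target D) \<longrightarrow> \<not> q (enc E) e))"

section \<open>The hard graphs\<close>

datatype node = Hub | Row nat nat | Col nat nat | Bridge nat | Pad nat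

(* Row 0 is the feeder path, Row 1 to Row k are the rows, and Pad t (t < p) the padding nodes. *)
fun is_node :: "nat \<Rightarrow> nat \<Rightarrow> nat \<Rightarrow> nat \<Rightarrow> node \<Rightarrow> bool" where
  "is_node k a b p Hub = True"
| "is_node k a b p (Row i d) = (1 \<le> d \<and> (i = 0 \<and> d < a \<or> 1 \<le> i \<and> i \<le> k \<and> d \<le> a))"
| "is_node k a b p (Col j e) = (j < k \<and> e \<le> b)"
| "is_node k a b p (Bridge j) = (j < k)"
| "is_node k a b p (Pad t) = (t < p)"

abbreviation core_nodes :: "nat \<Rightarrow> nat \<Rightarrow> nat \<Rightarrow> node set" where
  "core_nodes k a b \<equiv> {v. is_node k a b 0 v}"

lemma core_nodes_eq:
  "core_nodes k a b =
     {Hub} \<union> Row 0 ` {1..<a} \<union> case_prod Row ` ({1..k} \<times> {1..a})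
       \<union> case_prod Col ` ({..<k} \<times> {..b}) \<union> Bridge ` {..<k}"
proof (rule set_eqI)
  fix v
  show "v \<in> core_nodes k a b \<longleftrightarrow> v \<in> {Hub} \<union> Row 0 ` {1..<a} \<union> case_prod Row ` ({1..k} \<times> {1..a})
       \<union> case_prod Col ` ({..<k} \<times> {..b}) \<union> Bridge ` {..<k}"
    by (cases v) auto
qed

lemma card_core_nodes:
  assumes "1 \<le> a"
  shows "finite (core_nodes k a b)" and "card (core_nodes k a b) \<le> k * (a + b + 2) + a"
proof -
  show "finite (core_nodes k a b)"
    unfolding core_nodes_eq by blast
  have "card (core_nodes k a b)
      \<le> card {Hub} + card (Row 0 ` {1..<a}) + card (case_prod Row ` ({1..k} \<times> {1..a}))
         + card (case_prod Col ` ({..<k} \<times> {..b})) + card (Bridge ` {..<k})"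
    unfolding core_nodes_eq by (intro card_Un_le[THEN order_trans] add_right_mono) (rule order_refl)
  also have "\<dots> \<le> 1 + (a - 1) + k * a + k * (b + 1) + k"
    by (intro add_mono card_image_le[THEN order_trans]) (auto simp: card_cartesian_product)
  finally show "card (core_nodes k a b) \<le> k * (a + b + 2) + a"
    using assms by (simp add: algebra_simps)
qed

(* level_intact v + 1 bounds the distance from Col 0 0 to v from below; level_cut a i0 j0 v + a + 1
   bounds the distance from Row i0 1 to v once the cross edge (i0, j0) is deleted, (i0, j0) not in S. *)
fun level_intact :: "nat \<Rightarrow> node \<Rightarrow> int" where
  "level_intact a Hub = 0"
| "level_intact a (Row i d) = int d"
| "level_intact a (Col j e) = (if j = 0 then int e - 1 else int a + int e)"
| "level_intact a (Bridge j) = int a"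
| "level_intact a (Pad t) = 1"

fun level_cut :: "nat \<Rightarrow> nat \<Rightarrow> nat \<Rightarrow> node \<Rightarrow> int" where
  "level_cut a i0 j0 Hub = 0"
| "level_cut a i0 j0 (Row i d) = (if i = i0 then int d - int a - 2 else int d)"
| "level_cut a i0 j0 (Col j e) = (if j = j0 then int a + int e else int e - 1)"
| "level_cut a i0 j0 (Bridge j) = (if j = j0 then int a else -1)"
| "level_cut a i0 j0 (Pad t) = 1"

locale hard_instance =
  fixes k a b p :: nat
  assumes two_le_k: "2 \<le> k" and one_le_a: "1 \<le> a" and a_le_b: "a \<le> b" and b_le_Suc_a: "b \<le> Suc a"
begin

definition nodes :: "node set" where
  "nodes = {v. is_node k a b p v}"

lemma mem_nodes [simp]: "v \<in> nodes \<longleftrightarrow> is_node k a b p v"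
  by (simp add: nodes_def)

definition bits :: "(nat \<times> nat) set" where
  "bits = {1..k} \<times> {..<k}"

definition tip :: node where
  "tip = (if a = 1 then Hub else Row 0 (a - 1))"

lemma tip_cases: "tip = Hub \<or> tip = Row 0 (a - 1)"
  by (simp add: tip_def)

lemma is_node_tip: "is_node k a b p tip"
  using one_le_a by (auto simp: tip_def)

(* S: positions with a bypass; X: deleted cross edges. *)
definition edges :: "(nat \<times> nat) set \<Rightarrow> (nat \<times> nat) set \<Rightarrow> (node \<times> node) set" where
  "edges S X =
     {(Hub, Row i 1) | i. is_node k a b p (Row i 1)}
   \<union> {(Row i d, Row i (Suc d)) | i d. 1 \<le> d \<and> is_node k a b p (Row i (Suc d))}
   \<union> {(tip, Col j 0) | j. j < k} \<union> {(tip, Bridge j) | j. j < k}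
   \<union> {(Row i a, Col j 0) | i j. (i, j) \<in> bits - X}
   \<union> {(Row i a, Bridge j) | i j. (i, j) \<in> bits \<inter> S}
   \<union> {(Col j e, Col j (Suc e)) | j e. is_node k a b p (Col j (Suc e))}
   \<union> {(Col j e, Hub) | j e. is_node k a b p (Col j e)}
   \<union> {(Bridge j, Col j 0) | j. j < k} \<union> {(Bridge j, Hub) | j. j < k}
   \<union> {(Hub, Pad t) | t. t < p} \<union> {(Pad t, Hub) | t. t < p}"

abbreviation reach :: "(nat \<times> nat) set \<Rightarrow> (nat \<times> nat) set \<Rightarrow> nat \<Rightarrow> node \<Rightarrow> node \<Rightarrow> bool" where
  "reach S X \<equiv> reach_within (edges S X)"

lemma reach_row:
  assumes "1 \<le> d" "d \<le> d'" "is_node k a b p (Row i d')"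
  shows "reach S X (d' - d) (Row i d) (Row i d')"
  by (rule reach_within_path[where x = "Row i"]) (use assms in \<open>auto simp: edges_def\<close>)

lemma reach_column:
  assumes "e \<le> e'" "is_node k a b p (Col j e')"
  shows "reach S X (e' - e) (Col j e) (Col j e')"
  by (rule reach_within_path[where x = "Col j"]) (use assms in \<open>auto simp: edges_def\<close>)

lemma Hub_reach_row:
  assumes "is_node k a b p (Row i d)"
  shows "reach S X d Hub (Row i d)"
proof -
  have "(Hub, Row i 1) \<in> edges S X"
    using assms by (auto simp: edges_def)
  from reach_within_step[OF this reach_row[of 1 d]] assms show ?thesis
    by simp
qed

lemma Hub_reach_tip: "reach S X (a - 1) Hub tip"
proof (cases "a = 1")
  case True
  then show ?thesis
    unfolding tip_def by (simp add: reach_within_refl)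
next
  case False
  then show ?thesis
    unfolding tip_def using Hub_reach_row[of 0 "a - 1"] one_le_a by simp
qed

lemma row0_reach_tip:
  assumes "is_node k a b p (Row 0 d)"
  shows "reach S X (a - 1 - d) (Row 0 d) tip"
proof -
  from assms have "a \<noteq> 1" "1 \<le> d" "d \<le> a - 1" "is_node k a b p (Row 0 (a - 1))"
    by auto
  then show ?thesis
    unfolding tip_def using reach_row[of d "a - 1" 0] by simp
qed

lemma tip_reach_column:
  assumes "is_node k a b p (Col j e)"
  shows "reach S X (Suc e) tip (Col j e)"
proof -
  have "(tip, Col j 0) \<in> edges S X"
    using assms by (auto simp: edges_def)
  from reach_within_step[OF this reach_column[of 0 e]] assms show ?thesis
    by simp
qed

lemma Hub_reach_column:
  assumes "is_node k a b p (Col j e)"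
  shows "reach S X (a + e) Hub (Col j e)"
  using reach_within_trans[OF Hub_reach_tip tip_reach_column[OF assms]] one_le_a by simp

lemma Hub_reach_non_column:
  assumes "is_node k a b p v" "\<And>j e. v \<noteq> Col j e"
  shows "reach S X a Hub v"
proof (cases v)
  case Hub
  then show ?thesis
    by (simp add: reach_within_refl)
next
  case (Row i d)
  with assms(1) have "is_node k a b p (Row i d)" "d \<le> a"
    by auto
  with Row show ?thesis
    using reach_within_mono[OF Hub_reach_row] by blast
next
  case (Col j e)
  with assms(2) show ?thesis
    by blast
next
  case (Bridge j)
  with assms(1) have "(tip, v) \<in> edges S X"
    by (auto simp: edges_def)
  from reach_within_trans[OF Hub_reach_tip reach_within_edge[OF this]] one_le_a show ?thesis
    by simp
next
  case (Pad t)
  with assms(1) have "(Hub, v) \<in> edges S X"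
    by (auto simp: edges_def)
  from reach_within_mono[OF reach_within_edge[OF this]] one_le_a show ?thesis
    by simp
qed

lemma Hub_reach:
  assumes "is_node k a b p v"
  shows "reach S X (a + b) Hub v"
proof (cases "\<exists>j e. v = Col j e")
  case True
  then obtain j e where "v = Col j e"
    by blast
  with assms show ?thesis
    using reach_within_mono[OF Hub_reach_column] by simp
next
  case False
  with assms show ?thesis
    using reach_within_mono[OF Hub_reach_non_column] by simp
qed

lemma reach_Hub_direct:
  assumes "is_node k a b p v" "\<And>i d. v \<noteq> Row i d"
  shows "reach S X 1 v Hub"
proof (cases "v = Hub")
  case False
  with assms have "(v, Hub) \<in> edges S X"
    by (cases v) (auto simp: edges_def)
  then show ?thesis
    by (rule reach_within_edge)
qed (simp add: reach_within_refl)

lemma row_end_exit: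
  assumes "(i, j) \<in> bits" "(i, j) \<notin> X \<or> (i, j) \<in> S"
  obtains w where "(Row i a, w) \<in> edges S X" "(w, Hub) \<in> edges S X" "reach S X 1 w (Col j 0)"
proof (cases "(i, j) \<in> X")
  case True
  with assms have "(Row i a, Bridge j) \<in> edges S X" "(Bridge j, Hub) \<in> edges S X"
    "(Bridge j, Col j 0) \<in> edges S X"
    by (simp_all add: edges_def bits_def)
  then show ?thesis
    by (rule that[OF _ _ reach_within_edge])
next
  case False
  with assms have "(Row i a, Col j 0) \<in> edges S X" "(Col j 0, Hub) \<in> edges S X"
    by (simp_all add: edges_def bits_def)
  then show ?thesis
    by (rule that[OF _ _ reach_within_refl])
qed

lemma row_reach_Hub:
  assumes "is_node k a b p (Row i d)" "j < k" "(i, j) \<notin> X \<or> (i, j) \<in> S"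
  shows "reach S X (a + 1) (Row i d) Hub"
proof (cases "i = 0")
  case True
  have "(tip, Col 0 0) \<in> edges S X" "(Col 0 0, Hub) \<in> edges S X"
    using two_le_k by (auto simp: edges_def)
  then have "reach S X 2 tip Hub"
    by (rule reach_within_two)
  moreover from assms(1) True have "is_node k a b p (Row 0 d)"
    by simp
  ultimately show ?thesis
    using reach_within_trans[OF row0_reach_tip] True by fastforce
next
  case False
  with assms have ij: "(i, j) \<in> bits" and d: "1 \<le> d" "d \<le> a" "is_node k a b p (Row i a)"
    by (auto simp: bits_def)
  obtain w where "(Row i a, w) \<in> edges S X" "(w, Hub) \<in> edges S X"
    using row_end_exit[OF ij assms(3)] by blast
  then have "reach S X 2 (Row i a) Hub"
    by (rule reach_within_two)
  from reach_within_trans[OF reach_row[OF d] this] d show ?thesis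
    by simp
qed

lemma reach_Hub:
  assumes "is_node k a b p v" and exits: "\<And>i. \<exists>j < k. (i, j) \<notin> X \<or> (i, j) \<in> S"
  shows "reach S X (a + 1) v Hub"
proof (cases "\<exists>i d. v = Row i d")
  case True
  then obtain i d where "v = Row i d"
    by blast
  with assms show ?thesis
    using row_reach_Hub by blast
next
  case False
  with assms(1) show ?thesis
    using reach_within_mono[OF reach_Hub_direct] by simp
qed

lemma row_reach_column:
  assumes "is_node k a b p (Row i d)" "1 \<le> i" "is_node k a b p (Col j e)"
    and "(i, j) \<notin> X \<or> (i, j) \<in> S"
  shows "reach S X (a + b + 1) (Row i d) (Col j e)"
proof -
  from assms have ij: "(i, j) \<in> bits" and d: "1 \<le> d" "d \<le> a" "is_node k a b p (Row i a)"
    and "e \<le> b"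
    by (auto simp: bits_def)
  obtain w where "(Row i a, w) \<in> edges S X" "reach S X 1 w (Col j 0)"
    using row_end_exit[OF ij assms(4)] by blast
  then have "reach S X (2 + e) (Row i a) (Col j e)"
    using reach_within_trans[OF reach_within_step reach_column[of 0 e]] assms(3) by simp
  from reach_row[OF d] this show ?thesis
    by (rule reach_within_trans) (use d \<open>e \<le> b\<close> in linarith)
qed

lemma reach_all_cut:
  assumes "is_node k a b p u" "is_node k a b p v"
    and "\<And>i. \<exists>j < k. (i, j) \<notin> X \<or> (i, j) \<in> S"
  shows "reach S X (2 * a + b + 1) u v"
  using reach_within_trans[OF reach_Hub Hub_reach] assms by simp

lemma reach_all_intact:
  assumes "X \<subseteq> S" "is_node k a b p u" "is_node k a b p v"
  shows "reach S X (a + b + 1) u v"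
proof -
  have exits: "\<exists>j < k. (i, j) \<notin> X \<or> (i, j) \<in> S" for i
    using assms(1) two_le_k by (auto intro!: exI[of _ 0])
  show ?thesis
  proof (cases "\<exists>j e. v = Col j e")
    case True
    then obtain j e where v: "v = Col j e"
      by blast
    consider (row) i d where "u = Row i d" "1 \<le> i" | (row0) d where "u = Row 0 d" | (other) "\<And>i d. u \<noteq> Row i d"
      by (metis less_one not_le)
    then show ?thesis
    proof cases
      case row
      with assms v exits show ?thesis
        using row_reach_column by blast
    next
      case row0
      with assms v have "is_node k a b p (Row 0 d)" "is_node k a b p (Col j e)"
        by simp_all
      from row0_reach_tip[OF this(1)] tip_reach_column[OF this(2)]
      have "reach S X (a + b + 1) (Row 0 d) (Col j e)"
        by (rule reach_within_trans) (use \<open>is_node k a b p (Col j e)\<close> in auto)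
      with row0 v show ?thesis
        by simp
    next
      case other
      from reach_within_trans[OF reach_Hub_direct Hub_reach_column] assms other v show ?thesis
        by simp
    qed
  next
    case False
    from reach_within_trans[OF reach_Hub Hub_reach_non_column] assms(2,3) exits False a_le_b
    show ?thesis
      by simp
  qed
qed

lemma level_intact_edge: "(u, v) \<in> edges S X \<Longrightarrow> level_intact a v \<le> level_intact a u + 1"
  using one_le_a unfolding edges_def tip_def by auto

lemma level_cut_edge:
  assumes "(u, v) \<in> edges S {(i0, j0)}" "1 \<le> i0" "(i0, j0) \<notin> S"
  shows "level_cut a i0 j0 v \<le> level_cut a i0 j0 u + 1"
  using assms one_le_a unfolding edges_def tip_def bits_def by auto

lemma nodes_eq_core_pad: "nodes = core_nodes k a b \<union> Pad ` {..<p}"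
proof (rule set_eqI)
  fix v
  show "v \<in> nodes \<longleftrightarrow> v \<in> core_nodes k a b \<union> Pad ` {..<p}"
    by (cases v) auto
qed

lemma finite_nodes: "finite nodes"
  unfolding nodes_eq_core_pad using card_core_nodes(1)[OF one_le_a] by blast

lemma card_nodes: "card nodes = card (core_nodes k a b) + p"
proof -
  have "card nodes = card (core_nodes k a b) + card (Pad ` {..<p})"
    unfolding nodes_eq_core_pad
    by (rule card_Un_disjoint) (use card_core_nodes(1)[OF one_le_a] in auto)
  then show ?thesis
    by (simp add: card_image inj_on_def)
qed

definition enum :: "node \<Rightarrow> nat" where
  "enum = (SOME f. bij_betw f nodes {..<card nodes})"

lemma bij_enum: "bij_betw enum nodes {..<card nodes}"
proof -
  have "\<exists>f. bij_betw f nodes {..<card nodes}"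
    using ex_bij_betw_finite_nat[OF finite_nodes] by (simp add: atLeast0LessThan)
  then show ?thesis
    unfolding enum_def by (rule someI_ex)
qed

definition graph :: "(nat \<times> nat) set \<Rightarrow> (nat \<times> nat) set \<Rightarrow> (nat \<times> nat) set" where
  "graph S X = map_prod enum enum ` edges S X"

lemma edges_subset: "edges S X \<subseteq> nodes \<times> nodes"
  using one_le_a is_node_tip unfolding edges_def bits_def by auto

lemma diam_graph_intact:
  assumes "X \<subseteq> S"
  shows "diam (card nodes) (graph S X) = enat (a + b + 1)"
  unfolding graph_def
proof (rule diam_map_prod_eqI[OF bij_enum edges_subset, where \<psi> = "level_intact a" and s = "Col 0 0" and t = "Col 1 b"])
  show "reach S X (a + b + 1) u v" if "u \<in> nodes" "v \<in> nodes" for u v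
    using reach_all_intact[OF assms] that by simp
qed (use level_intact_edge two_le_k in auto)

lemma diam_graph_cut:
  assumes "(i, j) \<in> bits - S"
  shows "diam (card nodes) (graph S {(i, j)}) = enat (2 * a + b + 1)"
  unfolding graph_def
proof (rule diam_map_prod_eqI[OF bij_enum edges_subset, where \<psi> = "level_cut a i j" and s = "Row i 1" and t = "Col j b"])
  have exits: "\<exists>j' < k. (i', j') \<notin> {(i, j)} \<or> (i', j') \<in> S" for i'
    using two_le_k by (intro exI[of _ "if j = 0 then 1 else 0"]) auto
  show "reach S {(i, j)} (2 * a + b + 1) u v" if "u \<in> nodes" "v \<in> nodes" for u v
    using reach_all_cut[OF _ _ exits] that by simp
  show "level_cut a i j v \<le> level_cut a i j u + 1" if "(u, v) \<in> edges S {(i, j)}" for u v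
    using level_cut_edge[OF that] assms by (simp add: bits_def)
qed (use assms one_le_a in \<open>auto simp: bits_def\<close>)

lemma inj_on_map_prod_enum: "inj_on (map_prod enum enum) (nodes \<times> nodes)"
  using bij_enum by (simp add: bij_betw_def map_prod_inj_on)

lemma card_graph: "card (graph S X) = card (edges S X)"
  unfolding graph_def by (rule card_image[OF inj_on_subset[OF inj_on_map_prod_enum edges_subset]])

lemma edges_delete_cross:
  assumes "(i, j) \<in> bits"
  shows "edges S {(i, j)} = edges S {} - {(Row i a, Col j 0)}"
  using assms unfolding edges_def tip_def bits_def by auto

lemma graph_delete_cross:
  assumes "(i, j) \<in> bits"
  shows "graph S {} - {(enum (Row i a), enum (Col j 0))} = graph S {(i, j)}"
proof -
  have "(Row i a, Col j 0) \<in> edges S {}"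
    using assms by (simp add: edges_def)
  then have "{(Row i a, Col j 0)} \<subseteq> nodes \<times> nodes"
    using edges_subset by blast
  then have "map_prod enum enum ` (edges S {} - {(Row i a, Col j 0)})
      = map_prod enum enum ` edges S {} - map_prod enum enum ` {(Row i a, Col j 0)}"
    using edges_subset by (intro inj_on_image_set_diff[OF inj_on_map_prod_enum]) auto
  then show ?thesis
    unfolding graph_def edges_delete_cross[OF assms] by simp
qed

lemma cross_edge_in_graph:
  assumes "(i, j) \<in> bits"
  shows "(enum (Row i a), enum (Col j 0)) \<in> graph S {}"
proof -
  have "(Row i a, Col j 0) \<in> edges S {}"
    using assms by (simp add: edges_def)
  then show ?thesis
    unfolding graph_def by force
qed

lemma is_digraph_graph: "is_digraph (card nodes) (graph S X)"
  unfolding is_digraph_def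
proof (intro conjI allI)
  show "graph S X \<subseteq> {0..<card nodes} \<times> {0..<card nodes}"
    unfolding graph_def using edges_subset bij_betw_apply[OF bij_enum] by fastforce
  show "(x, x) \<notin> graph S X" for x
  proof
    assume "(x, x) \<in> graph S X"
    then obtain u v where uv: "(u, v) \<in> edges S X" "enum u = x" "enum v = x"
      unfolding graph_def by auto
    with edges_subset have "u = v"
      using inj_onD[OF bij_betw_imp_inj_on[OF bij_enum]] by blast
    with uv(1) show False
      unfolding edges_def using tip_cases by auto
  qed
qed

lemma card_bits: "card bits = k * k"
  by (simp add: bits_def card_cartesian_product)

lemma finite_edges: "finite (edges S X)"
  using finite_subset[OF edges_subset] finite_nodes by blast

lemma card_graph_lower: "k * k \<le> card (graph S {})"
proof -
  let ?cross = "(\<lambda>(i, j). (Row i a, Col j 0)) ` bits"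
  have "card ?cross = k * k"
    using card_bits by (subst card_image) (auto simp: inj_on_def)
  moreover have "?cross \<subseteq> edges S {}"
    by (auto simp: edges_def)
  ultimately show ?thesis
    unfolding card_graph using card_mono[OF finite_edges] by metis
qed

lemma card_graph_upper: "card (graph S X) \<le> 4 * card nodes + 2 * (k * k)"
proof -
  define succ where
    "succ v = (case v of Row i d \<Rightarrow> Row i (Suc d) | Col j e \<Rightarrow> Col j (Suc e) | Bridge j \<Rightarrow> Col j 0 | _ \<Rightarrow> Hub)"
    for v
  let ?V = nodes
  let ?into_Hub = "(\<lambda>u. (u, Hub)) ` ?V" and ?forward = "(\<lambda>u. (u, succ u)) ` ?V"
    and ?from_Hub = "Pair Hub ` ?V" and ?from_tip = "Pair tip ` ?V"
    and ?cross = "(\<lambda>(i, j). (Row i a, Col j 0)) ` bits" and ?bypass = "(\<lambda>(i, j). (Row i a, Bridge j)) ` bits"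
  have "edges S X \<subseteq> ?into_Hub \<union> ?forward \<union> ?from_Hub \<union> ?from_tip \<union> ?cross \<union> ?bypass"
  proof
    fix e
    assume "e \<in> edges S X"
    then show "e \<in> ?into_Hub \<union> ?forward \<union> ?from_Hub \<union> ?from_tip \<union> ?cross \<union> ?bypass"
      unfolding edges_def succ_def using is_node_tip by (auto simp: image_iff Bex_def split_paired_Ex)
  qed
  then have "card (edges S X) \<le> card (?into_Hub \<union> ?forward \<union> ?from_Hub \<union> ?from_tip \<union> ?cross \<union> ?bypass)"
    using finite_nodes by (intro card_mono) (auto simp: bits_def)
  also have "\<dots> \<le> card ?into_Hub + card ?forward + card ?from_Hub + card ?from_tip + card ?cross + card ?bypass"
    by (intro card_Un_le[THEN order_trans] add_right_mono) (rule order_refl)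
  also have "\<dots> \<le> card ?V + card ?V + card ?V + card ?V + card bits + card bits"
    by (intro add_mono card_image_le) (simp_all add: finite_nodes bits_def)
  finally show ?thesis
    unfolding card_graph card_bits by simp
qed

lemma fd_target_instance: "fd_target (a + b + 1) = 2 * a + b + 1"
  using a_le_b b_le_Suc_a unfolding fd_target_def by (cases "b = a") auto

definition family :: "(nat \<times> nat) set set" where
  "family = (\<lambda>S. graph S {}) ` Pow bits"

lemma family_member:
  assumes "E \<in> family"
  shows "is_digraph (card nodes) E" "diam (card nodes) E = enat (a + b + 1)"
    "k * k \<le> card E" "card E \<le> 4 * card nodes + 2 * (k * k)"
  using assms is_digraph_graph diam_graph_intact card_graph_lower card_graph_upper
  unfolding family_def by auto

lemma family_encoding_injective:
  assumes "answers_fd_queries (card nodes) (a + b + 1) family enc q"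
  shows "inj_on (\<lambda>S. enc (graph S {})) (Pow bits)"
proof -
  have distinct: "enc (graph S1 {}) \<noteq> enc (graph S2 {})"
    if "S1 \<subseteq> bits" "S2 \<subseteq> bits" "(i, j) \<in> S1 - S2" for S1 S2 i j
  proof -
    let ?e = "(enum (Row i a), enum (Col j 0))"
    have ij: "(i, j) \<in> bits"
      using that by blast
    have "diam (card nodes) (graph S1 {} - {?e}) = enat (a + b + 1)"
      using diam_graph_intact[of "{(i, j)}" S1] that unfolding graph_delete_cross[OF ij] by simp
    then have "q (enc (graph S1 {})) ?e"
      using assms cross_edge_in_graph[OF ij] that(1)
      unfolding answers_fd_queries_def family_def by blast
    moreover have "diam (card nodes) (graph S2 {} - {?e}) = enat (fd_target (a + b + 1))"
      using diam_graph_cut[of i j S2] that ij unfolding graph_delete_cross[OF ij] fd_target_instance by simp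
    then have "\<not> q (enc (graph S2 {})) ?e"
      using assms cross_edge_in_graph[OF ij] that(2)
      unfolding answers_fd_queries_def family_def by blast
    ultimately show ?thesis
      by metis
  qed
  show ?thesis
  proof (rule inj_onI)
    fix S1 S2
    assume "S1 \<in> Pow bits" "S2 \<in> Pow bits" "enc (graph S1 {}) = enc (graph S2 {})"
    then show "S1 = S2"
      using distinct[of S1 S2] distinct[of S2 S1] by (metis Diff_iff PowD prod.collapse subset_antisym subsetI)
  qed
qed

lemma family_encoding_long:
  assumes "answers_fd_queries (card nodes) (a + b + 1) family enc q"
  shows "\<exists>E \<in> family. k * k \<le> length (enc E)"
  using injective_code_long[OF _ family_encoding_injective[OF assms]] card_bits
  unfolding family_def bits_def by auto

end

section \<open>Choice of the parameters\<close>

lemma side_length_bounds: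
  fixes s m n D :: nat
  assumes "3 \<le> s" "3 \<le> D" "s * s \<le> m" "m < (s + 1) * (s + 1)" "D * s < n"
  defines "k \<equiv> (s + 1) div 2"
  shows "2 \<le> k" "k * k \<le> m" "m \<le> 8 * (k * k)" "k * (D + 1) + (D - 1) div 2 \<le> n"
proof -
  have k: "2 \<le> k" "k \<le> s" "s \<le> 2 * k" "2 * k \<le> s + 1"
    using assms(1) unfolding k_def by presburger+
  show "2 \<le> k"
    by (fact k(1))
  show "k * k \<le> m"
    using mult_le_mono[OF k(2) k(2)] assms(3) by linarith
  have "(s + 1) * (s + 1) \<le> (2 * k + 1) * (2 * k + 1)"
    using k(3) by (intro mult_mono) auto
  moreover have "(2 * k + 1) * (2 * k + 1) \<le> 8 * (k * k)"
  proof -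
    have "2 * k \<le> k * k"
      using mult_le_mono1[OF k(1), of k] by simp
    moreover have "(2 * k + 1) * (2 * k + 1) = 4 * (k * k) + 4 * k + 1"
      by (simp add: algebra_simps)
    ultimately show ?thesis
      using k(1) by linarith
  qed
  ultimately show "m \<le> 8 * (k * k)"
    using assms(4) by linarith
  obtain s' D' where s': "s = s' + 3" and D': "D = D' + 3"
    using assms(1,2) by (metis add.commute le_Suc_ex)
  have "2 * k * (D + 1) \<le> (s + 1) * (D + 1)"
    using k(4) by (intro mult_right_mono) auto
  moreover have "(s + 1) * (D + 1) + (D - 1) \<le> 2 * (D * s)"
    unfolding s' D' by (simp add: algebra_simps)
  moreover have "2 * ((D - 1) div 2) \<le> D - 1"
    by simp
  ultimately have "2 * (k * (D + 1) + (D - 1) div 2) \<le> 2 * (D * s)"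
    by (simp add: algebra_simps)
  then have "k * (D + 1) + (D - 1) div 2 \<le> D * s"
    by simp
  with assms(5) show "k * (D + 1) + (D - 1) div 2 \<le> n"
    by simp
qed

lemma side_length_exists:
  fixes n m D :: nat
  assumes "n \<le> m" "3 \<le> D" "real D < real n / sqrt (real m)"
  obtains k where "2 \<le> k" "k * k \<le> m" "m \<le> 8 * (k * k)" "k * (D + 1) + (D - 1) div 2 \<le> n"
proof -
  have "m \<noteq> 0"
    using assms(2,3) by (cases "m = 0") auto
  then have sqrt_pos: "0 < sqrt (real m)"
    by simp
  have D_sqrt: "real D * sqrt (real m) < real n"
    using assms(3) sqrt_pos by (simp add: less_divide_eq)
  define s where "s = floor_sqrt m"
  have s_sq: "s * s \<le> m" "m < (s + 1) * (s + 1)"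
    using floor_sqrt_power2_le[of m] Suc_floor_sqrt_power2_gt[of m]
    unfolding s_def by (simp_all add: power2_eq_square)
  have "real s \<le> sqrt (real m)"
    using s_sq(1) by (intro real_le_rsqrt) (simp add: power2_eq_square flip: of_nat_mult)
  then have "real D * real s < real n"
    using D_sqrt by (meson mult_left_mono of_nat_0_le_iff order_le_less_trans)
  then have Ds: "D * s < n"
    by (simp flip: of_nat_mult)
  have "3 * sqrt (real m) < sqrt (real m) * sqrt (real m)"
  proof -
    have "3 * sqrt (real m) \<le> real D * sqrt (real m)"
      using assms(2) sqrt_pos by (intro mult_right_mono) auto
    also have "\<dots> < real m"
      using D_sqrt assms(1) by linarith
    finally show ?thesis
      by simp
  qed
  then have "3 < sqrt (real m)"
    using mult_less_cancel_right_pos[OF sqrt_pos] by blast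
  then have "3 * 3 < sqrt (real m) * sqrt (real m)"
    using sqrt_pos by (intro mult_strict_mono) auto
  then have "9 < m"
    by simp
  have "3 \<le> s"
  proof (rule ccontr)
    assume "\<not> 3 \<le> s"
    then have "(s + 1) * (s + 1) \<le> 3 * 3"
      by (intro mult_mono) auto
    with s_sq(2) \<open>9 < m\<close> show False
      by simp
  qed
  from side_length_bounds[OF this assms(2) s_sq Ds] that show ?thesis
    by blast
qed

lemma hard_family_exists:
  fixes n m D :: nat
  assumes "n \<le> m" "3 \<le> D" "real D < real n / sqrt (real m)"
  shows "\<exists>F. (\<forall>E \<in> F. is_digraph n E \<and> diam n E = enat D \<and>
      1 / 8 * real m \<le> real (card E) \<and> real (card E) \<le> 6 * real m) \<and>
    (\<forall>enc q. answers_fd_queries n D F enc q \<longrightarrow> (\<exists>E \<in> F. 1 / 8 * real m \<le> real (length (enc E))))"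
proof -
  obtain k where k: "2 \<le> k" "k * k \<le> m" "m \<le> 8 * (k * k)" "k * (D + 1) + (D - 1) div 2 \<le> n"
    using side_length_exists[OF assms] by blast
  define a b where "a = (D - 1) div 2" and "b = D div 2"
  have ab: "1 \<le> a" "a \<le> b" "b \<le> Suc a" "D = a + b + 1"
    using assms(2) unfolding a_def b_def by presburger+
  define p where "p = n - card (core_nodes k a b)"
  interpret hard_instance k a b p
    using k(1) ab by unfold_locales
  have "k * (D + 1) + a \<le> n"
    using k(4) unfolding a_def .
  then have "card (core_nodes k a b) \<le> n"
    using card_core_nodes(2)[OF ab(1), of k b] ab(4) by simp
  then have n: "card nodes = n"
    using card_nodes unfolding p_def by simp
  show ?thesis
  proof (intro exI[of _ family] conjI ballI allI impI)
    fix E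
    assume "E \<in> family"
    with family_member[of E] k(2,3) assms(1) have "m \<le> 8 * card E" "card E \<le> 6 * m"
      unfolding n by linarith+
    then show "1 / 8 * real m \<le> real (card E)" "real (card E) \<le> 6 * real m"
      by simp_all
    show "is_digraph n E" "diam n E = enat D"
      using family_member[OF \<open>E \<in> family\<close>] unfolding n ab(4) by simp_all
  next
    fix enc q
    assume "answers_fd_queries n D family enc q"
    then obtain E where E: "E \<in> family" "k * k \<le> length (enc E)"
      using family_encoding_long unfolding n ab(4) by blast
    from E(2) k(3) have "m \<le> 8 * length (enc E)"
      by linarith
    then have "1 / 8 * real m \<le> real (length (enc E))"
      by simp
    with E(1) show "\<exists>E \<in> family. 1 / 8 * real m \<le> real (length (enc E))"
      by blast
  qed
qed

theorem lemma9:
  "\<exists>c1 c2 c3 :: real. c1 > 0 \<and> c2 > 0 \<and> c3 > 0 \<and>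
    (\<forall>n m D :: nat. n ^ 2 \<ge> m \<and> m \<ge> n \<and> n \<ge> 4 \<and>
        real n / sqrt (real m) > real D \<and> D \<ge> 3 \<longrightarrow>
      (\<exists>F :: (nat \<times> nat) set set.
         (\<forall>E \<in> F. is_digraph n E \<and> diam n E = enat D \<and>
                   c1 * real m \<le> real (card E) \<and> real (card E) \<le> c2 * real m) \<and>
         (\<forall>(enc :: (nat \<times> nat) set \<Rightarrow> bool list) (q :: bool list \<Rightarrow> nat \<times> nat \<Rightarrow> bool).
            (\<forall>E \<in> F. \<forall>e \<in> E.
               (diam n (E - {e}) = enat D \<longrightarrow> q (enc E) e) \<and>
               (diam n (E - {e}) = enat (fd_target D) \<longrightarrow> \<not> q (enc E) e))
            \<longrightarrow> (\<exists>E \<in> F. c3 * real m \<le> real (length (enc E))))))"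
  \<comment> \<open>c1 = c3 = 1/8 and c2 = 6.\<close>
  by (intro exI[of _ "1 / 8"] exI[of _ 6] exI[of _ "1 / 8"] conjI allI impI;
      (elim conjE, rule hard_family_exists[unfolded answers_fd_queries_def], assumption+)?; simp)

end
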